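(* Let $P\subset\mathbb{R}^d$ be a polytope that multi-tiles $\mathbb{R}^d$ under $\mathcal{G}$, i.e. $\sum_{g\in\mathcal{G}}1_P(gx)=m$ for almost every $x\in\mathbb{R}^d$, for some integer $m$. Then the function $f_P(x)=\sum_{g\in\mathcal{G}}\omega_P(gx)$ is constant on $T=\{(x_1,\dots,x_d)\in\mathbb{R}^d: 0\le x_1\le\dots\le x_d\le 1/2\}$, equal to $|\mathcal{W}|\operatorname{vol}(P)$.
   Context: $\mathcal{W}$ is the group of linear maps of $\mathbb{R}^d$ generated by the reflections in the coordinate hyperplanes and all permutations of coordinates ($|\mathcal{W}|=2^d d!$); $\mathcal{G}$ is the group generated by $\mathcal{W}$ and all translations by vectors of $\mathbb{Z}^d$. $1_P$ is the indicator function of $P$, and $\omega_P(x)=\operatorname{vol}(B(x,r)\cap P)/\operatorname{vol}(B(x,r))$ for all sufficiently small $r>0$. *)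

theory Defs
  imports "HOL-Analysis.Analysis"
begin

text \<open>Points of R^d are vectors of type real^'n with d = CARD('n).\<close>

definition coord_reflection :: "'n::finite \<Rightarrow> (real^'n \<Rightarrow> real^'n)" where
  "coord_reflection k = (\<lambda>x. \<chi> i. if i = k then - (x $ i) else x $ i)"

definition coord_permutation :: "('n::finite \<Rightarrow> 'n) \<Rightarrow> (real^'n \<Rightarrow> real^'n)" where
  "coord_permutation \<sigma> = (\<lambda>x. \<chi> i. x $ (\<sigma> i))"

definition int_translation :: "real^'n::finite \<Rightarrow> (real^'n \<Rightarrow> real^'n)" where
  "int_translation v = (\<lambda>x. x + v)"

text \<open>The group W generated by reflections in coordinate hyperplanes and permutations
  of coordinates (all generators have finite order, so the generated monoid is the group).\<close>
inductive_set Wgroup :: "(real^'n::finite \<Rightarrow> real^'n) set" where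
  W_id: "id \<in> Wgroup"
| W_refl: "g \<in> Wgroup \<Longrightarrow> coord_reflection k \<circ> g \<in> Wgroup"
| W_perm: "g \<in> Wgroup \<Longrightarrow> \<sigma> permutes UNIV \<Longrightarrow> coord_permutation \<sigma> \<circ> g \<in> Wgroup"

inductive_set Ggroup :: "(real^'n::finite \<Rightarrow> real^'n) set" where
  G_id: "id \<in> Ggroup"
| G_W: "g \<in> Ggroup \<Longrightarrow> w \<in> Wgroup \<Longrightarrow> w \<circ> g \<in> Ggroup"
| G_trans: "g \<in> Ggroup \<Longrightarrow> (\<forall>i. v $ i \<in> \<int>) \<Longrightarrow> int_translation v \<circ> g \<in> Ggroup"

definition gen_polytope :: "(real^'n::finite) set \<Rightarrow> bool" where
  "gen_polytope P \<longleftrightarrow> (\<exists>\<F>. finite \<F> \<and> (\<forall>S\<in>\<F>. polytope S) \<and> P = \<Union>\<F>)"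

definition local_density :: "(real^'n::finite) set \<Rightarrow> real^'n \<Rightarrow> real" where
  "local_density P x = (THE c. \<exists>e>0. \<forall>r. 0 < r \<and> r < e \<longrightarrow>
      measure lebesgue (ball x r \<inter> P) / measure lebesgue (ball x r) = c)"

definition simplex_T :: "(real^'n::{finite,linorder}) set" where
  "simplex_T = {x. (\<forall>i. 0 \<le> x $ i \<and> x $ i \<le> 1/2) \<and> (\<forall>i j. i \<le> j \<longrightarrow> x $ i \<le> x $ j)}"

end

theory Submission
  imports Defs
begin

text \<open>Every element of \<open>\<G>\<close> is an affine map \<open>x \<mapsto> w x + v\<close> with \<open>w \<in> \<W>\<close> a signed
  permutation and \<open>v \<in> \<int>\<^sup>d\<close>; \<open>\<W>\<close> is finite and consists of measure-preserving isometries.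
  Integrating the multi-tiling identity over the half-open unit cube, whose lattice translates
  tile \<open>\<real>\<^sup>d\<close>, gives \<open>m = |\<W>| vol(P)\<close>.
  Near any point a polytope coincides with its tangent cone, so the ratio defining \<open>\<omega>\<^sub>P\<close> is
  constant for small radii. Only finitely many \<open>g\<close> move \<open>x\<close> near \<open>P\<close>, so a single radius \<open>r\<close>
  works for all of them, and then \<open>f\<^sub>P(x)\<close> is the average of \<open>\<Sum>\<^sub>g 1\<^sub>P(g y)\<close> over
  \<open>B(x, r)\<close>, which is \<open>m\<close>. Hence \<open>f\<^sub>P\<close> is constant on all of \<open>\<real>\<^sup>d\<close>, not only on \<open>T\<close>.\<close>

section \<open>The groups \<open>\<W>\<close> and \<open>\<G>\<close>\<close>

definition signed_perms :: "(real^'n::finite \<Rightarrow> real^'n) set" where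
  "signed_perms = {w. \<exists>s \<sigma>. \<sigma> permutes UNIV \<and> (\<forall>i. s i = 1 \<or> s i = -1) \<and> w = (\<lambda>x. \<chi> i. s i * x $ \<sigma> i)}"

lemma signed_permsE:
  assumes "w \<in> signed_perms"
  obtains s \<sigma> where "\<sigma> permutes UNIV" "\<forall>i. s i = 1 \<or> s i = -1" "w = (\<lambda>x. \<chi> i. s i * x $ \<sigma> i)"
  using assms unfolding signed_perms_def by blast

lemma Wgroup_subset_signed_perms: "Wgroup \<subseteq> signed_perms"
proof
  fix g :: "real^'n \<Rightarrow> real^'n" assume "g \<in> Wgroup"
  then show "g \<in> signed_perms"
  proof induction
    case W_id
    show ?case unfolding signed_perms_def
      by (intro CollectI exI[of _ "\<lambda>_. 1"] exI[of _ id]) (auto simp: permutes_id)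
  next
    case (W_refl g k)
    obtain s \<sigma> where "\<sigma> permutes UNIV" "\<forall>i. s i = 1 \<or> s i = -1" "g = (\<lambda>x. \<chi> i. s i * x $ \<sigma> i)"
      using W_refl.IH by (rule signed_permsE)
    then show ?case unfolding signed_perms_def
      by (intro CollectI exI[of _ "\<lambda>i. if i = k then - s i else s i"] exI[of _ \<sigma>])
        (auto simp: coord_reflection_def fun_eq_iff vec_eq_iff)
  next
    case (W_perm g \<tau>)
    obtain s \<sigma> where "\<sigma> permutes UNIV" "\<forall>i. s i = 1 \<or> s i = -1" "g = (\<lambda>x. \<chi> i. s i * x $ \<sigma> i)"
      using W_perm.IH by (rule signed_permsE)
    with W_perm show ?case unfolding signed_perms_def
      by (intro CollectI exI[of _ "\<lambda>i. s (\<tau> i)"] exI[of _ "\<sigma> \<circ> \<tau>"])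
        (auto simp: coord_permutation_def fun_eq_iff vec_eq_iff permutes_compose)
  qed
qed

lemma finite_signed_perms: "finite (signed_perms :: (real^'n::finite \<Rightarrow> real^'n) set)"
proof -
  let ?signs = "PiE (UNIV::'n set) (\<lambda>_. {1::real, -1})"
  have "signed_perms \<subseteq> (\<lambda>(s,\<sigma>). (\<lambda>x::real^'n. \<chi> i. s i * x $ \<sigma> i)) ` (?signs \<times> {\<sigma>. \<sigma> permutes UNIV})"
    unfolding signed_perms_def by (auto simp: PiE_def Pi_def image_iff)
  moreover have "finite (?signs \<times> {\<sigma>. \<sigma> permutes (UNIV::'n set)})"
    by (intro finite_cartesian_product finite_PiE finite_permutations) auto
  ultimately show ?thesis by (meson finite_imageI finite_subset)
qed

lemma finite_Wgroup: "finite (Wgroup :: (real^'n::finite \<Rightarrow> real^'n) set)"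
  using finite_signed_perms Wgroup_subset_signed_perms finite_subset by blast

lemma Wgroup_comp: "w \<in> Wgroup \<Longrightarrow> w' \<in> Wgroup \<Longrightarrow> w \<circ> w' \<in> Wgroup"
proof (induction w rule: Wgroup.induct)
  case W_id then show ?case by simp
next
  case (W_refl g k)
  then have "coord_reflection k \<circ> (g \<circ> w') \<in> Wgroup" by (intro Wgroup.W_refl)
  then show ?case by (simp only: comp_assoc)
next
  case (W_perm g \<sigma>)
  then have "coord_permutation \<sigma> \<circ> (g \<circ> w') \<in> Wgroup" by (intro Wgroup.W_perm)
  then show ?case by (simp only: comp_assoc)
qed

lemma orthogonal_transformation_signed_perm:
  assumes "w \<in> signed_perms"
  shows "orthogonal_transformation w"
proof -
  obtain s \<sigma> where h: "\<sigma> permutes UNIV" "\<forall>i. s i = 1 \<or> s i = -1" "w = (\<lambda>x. \<chi> i. s i * x $ \<sigma> i)"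
    using assms by (rule signed_permsE)
  have sq: "(s i * a)\<^sup>2 = a\<^sup>2" for i a
    using h(2) by (metis power2_minus mult_minus_left mult_1)
  have "norm (w x) = norm x" for x
  proof -
    have "(\<Sum>i\<in>UNIV. (s i * x $ \<sigma> i)\<^sup>2) = (\<Sum>i\<in>UNIV. (x $ i)\<^sup>2)"
      using sum.permute[OF h(1), of "\<lambda>i. (x $ i)\<^sup>2"] by (simp add: sq comp_def)
    then show ?thesis using h(3) by (simp add: norm_vec_def L2_set_def)
  qed
  moreover have "linear w"
    unfolding h(3) by (rule linearI) (auto simp: vec_eq_iff algebra_simps)
  ultimately show ?thesis by (simp add: orthogonal_transformation)
qed

lemma orthogonal_transformation_Wgroup: "w \<in> Wgroup \<Longrightarrow> orthogonal_transformation w"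
  using Wgroup_subset_signed_perms orthogonal_transformation_signed_perm by blast

definition int_lattice :: "(real^'n::finite) set" where
  "int_lattice = {v. \<forall>i. v $ i \<in> \<int>}"

lemma signed_perm_int_lattice:
  assumes "w \<in> signed_perms" "v \<in> int_lattice"
  shows "w v \<in> int_lattice"
proof -
  obtain s \<sigma> where h: "\<sigma> permutes UNIV" "\<forall>i. s i = 1 \<or> s i = -1" "w = (\<lambda>x. \<chi> i. s i * x $ \<sigma> i)"
    using assms(1) by (rule signed_permsE)
  have "s i * v $ \<sigma> i \<in> \<int>" for i
    using h(2) assms(2) by (metis int_lattice_def mem_Collect_eq mult_1 mult_minus1 Ints_minus)
  then show ?thesis using h(3) by (simp add: int_lattice_def)
qed

definition aff_map :: "(real^'n::finite \<Rightarrow> real^'n) \<Rightarrow> real^'n \<Rightarrow> real^'n \<Rightarrow> real^'n" where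
  "aff_map w v = (\<lambda>x. w x + v)"

lemma aff_map_image: "aff_map w v ` S = (+) v ` w ` S"
  by (auto simp: aff_map_def image_iff add.commute)

lemma Ggroup_eq_aff_maps:
  "(Ggroup :: (real^'n::finite \<Rightarrow> real^'n) set) = (\<lambda>(w,v). aff_map w v) ` (Wgroup \<times> int_lattice)"
  (is "?G = ?A")
proof
  show "?G \<subseteq> ?A"
  proof
    fix g assume "g \<in> ?G"
    then show "g \<in> ?A"
    proof induction
      case G_id
      show ?case by (rule image_eqI[of _ _ "(id,0)"]) (auto simp: int_lattice_def aff_map_def Wgroup.W_id)
    next
      case (G_W g w)
      then obtain w' v where h: "w' \<in> Wgroup" "v \<in> int_lattice" "g = aff_map w' v" by auto
      have "linear w"
        using G_W(2) by (intro orthogonal_transformation_linear orthogonal_transformation_Wgroup)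
      then have "w \<circ> g = aff_map (w \<circ> w') (w v)"
        using h by (auto simp: aff_map_def fun_eq_iff linear_add)
      moreover have "w \<circ> w' \<in> Wgroup" using Wgroup_comp G_W h by blast
      moreover have "w v \<in> int_lattice"
        using signed_perm_int_lattice Wgroup_subset_signed_perms G_W h by blast
      ultimately show ?case by (intro image_eqI[of _ _ "(w \<circ> w', w v)"]) auto
    next
      case (G_trans g u)
      then obtain w' v where h: "w' \<in> Wgroup" "v \<in> int_lattice" "g = aff_map w' v" by auto
      then have "int_translation u \<circ> g = aff_map w' (v + u)"
        by (auto simp: aff_map_def fun_eq_iff int_translation_def)
      moreover have "v + u \<in> int_lattice" using h G_trans by (auto simp: int_lattice_def)
      ultimately show ?case using h by (intro image_eqI[of _ _ "(w', v + u)"]) auto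
    qed
  qed
  show "?A \<subseteq> ?G"
  proof
    fix g assume "g \<in> ?A"
    then obtain w v where wv: "w \<in> Wgroup" "v \<in> int_lattice" "g = aff_map w v" by auto
    have "int_translation v \<circ> (w \<circ> id) \<in> ?G"
      using wv by (intro Ggroup.G_trans Ggroup.G_W Ggroup.G_id) (auto simp: int_lattice_def)
    moreover have "int_translation v \<circ> (w \<circ> id) = aff_map w v"
      by (auto simp: aff_map_def int_translation_def)
    ultimately show "g \<in> ?G" using wv(3) by simp
  qed
qed

lemma inj_on_aff_map: "inj_on (\<lambda>(w,v). aff_map w v) (signed_perms \<times> (UNIV :: (real^'n::finite) set))"
proof (rule inj_onI, clarify)
  fix w v w' v' assume h: "w \<in> signed_perms" "w' \<in> signed_perms" "aff_map w v = aff_map w' v'"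
  have "w 0 = 0" "w' 0 = 0"
    using h(1,2) by (metis orthogonal_transformation_signed_perm orthogonal_transformation_linear linear_0)+
  then have "v = v'" using fun_cong[OF h(3), of 0] by (simp add: aff_map_def)
  with h(3) show "w = w' \<and> v = v'" by (auto simp: aff_map_def fun_eq_iff)
qed

section \<open>Invariance of Lebesgue measure\<close>

lemma signed_perm_image_cbox:
  assumes "w \<in> signed_perms"
  obtains a' b' where "w ` cbox a b = cbox a' b'" "(\<Prod>i\<in>UNIV. b' $ i - a' $ i) = (\<Prod>i\<in>UNIV. b $ i - a $ i)"
proof -
  obtain s \<sigma> where h: "\<sigma> permutes UNIV" "\<forall>i. s i = 1 \<or> s i = -1" "w = (\<lambda>x. \<chi> i. s i * x $ \<sigma> i)"
    using assms by (rule signed_permsE)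
  define a' where "a' = (\<chi> i. if s i = 1 then a $ \<sigma> i else - b $ \<sigma> i)"
  define b' where "b' = (\<chi> i. if s i = 1 then b $ \<sigma> i else - a $ \<sigma> i)"
  have "w ` cbox a b \<subseteq> cbox a' b'"
  proof clarify
    fix x assume x: "x \<in> cbox a b"
    show "w x \<in> cbox a' b'" unfolding mem_box_cart
    proof
      fix i
      have "s i = 1 \<or> s i = -1" using h(2) by blast
      then show "a' $ i \<le> w x $ i \<and> w x $ i \<le> b' $ i"
        using x unfolding mem_box_cart a'_def b'_def h(3) by (elim disjE) auto
    qed
  qed
  moreover have "cbox a' b' \<subseteq> w ` cbox a b"
  proof
    fix y assume y: "y \<in> cbox a' b'"
    define x where "x = (\<chi> j. s (inv \<sigma> j) * y $ (inv \<sigma> j))"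
    have ss: "s i * s i = 1" for i using h(2) by (metis mult_1 mult_minus1 minus_minus)
    have "w x = y"
      unfolding h(3) x_def vec_eq_iff
      using permutes_inverses(2)[OF h(1)] ss by (simp add: mult.assoc[symmetric])
    moreover have "x \<in> cbox a b" unfolding mem_box_cart
    proof
      fix j
      define i where "i = inv \<sigma> j"
      have j: "\<sigma> i = j" unfolding i_def using permutes_inverses(1)[OF h(1)] by simp
      have "s i = 1 \<or> s i = -1" using h(2) by blast
      then show "a $ j \<le> x $ j \<and> x $ j \<le> b $ j"
        using y[unfolded mem_box_cart, rule_format, of i] unfolding x_def a'_def b'_def
        by (elim disjE) (auto simp: j i_def[symmetric])
    qed
    ultimately show "y \<in> w ` cbox a b" by blast
  qed
  ultimately have "w ` cbox a b = cbox a' b'" by (rule antisym)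
  moreover have "(\<Prod>i\<in>UNIV. b' $ i - a' $ i) = (\<Prod>i\<in>UNIV. b $ \<sigma> i - a $ \<sigma> i)"
    using h(2) unfolding a'_def b'_def by (intro prod.cong) auto
  moreover have "\<dots> = (\<Prod>i\<in>UNIV. b $ i - a $ i)"
    using prod.permute[OF h(1), of "\<lambda>i. b $ i - a $ i"] by (simp add: comp_def)
  ultimately show ?thesis using that by simp
qed

lemma measure_signed_perm_cbox:
  assumes "w \<in> signed_perms"
  shows "measure lebesgue (w ` cbox a b) = measure lebesgue (cbox a b)"
proof (cases "cbox a b = {}")
  case False
  obtain a' b' where image: "w ` cbox a b = cbox a' b'"
    and "(\<Prod>i\<in>UNIV. b' $ i - a' $ i) = (\<Prod>i\<in>UNIV. b $ i - a $ i)"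
    using signed_perm_image_cbox[OF assms] .
  moreover have "cbox a' b' \<noteq> {}" using False image by auto
  ultimately show ?thesis using False by (simp add: content_cbox_cart)
qed simp

lemma measure_signed_perm_image:
  assumes "w \<in> signed_perms" "S \<in> lmeasurable"
  shows "measure lebesgue (w ` S) = measure lebesgue S"
  using measure_linear_sufficient[of w S 1] assms measure_signed_perm_cbox
    orthogonal_transformation_signed_perm orthogonal_transformation_linear
  by (metis mult_1)

lemma measure_aff_map_image:
  assumes "w \<in> signed_perms" "S \<in> lmeasurable"
  shows "measure lebesgue (aff_map w v ` S) = measure lebesgue S"
  unfolding aff_map_image using measure_signed_perm_image[OF assms] by (simp add: measure_translation)

section \<open>Multiplicity and volume\<close>

definition lattice_ball :: "real \<Rightarrow> (real^'n::finite) set" where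
  "lattice_ball R = int_lattice \<inter> cball 0 R"

lemma finite_lattice_ball: "finite (lattice_ball R :: (real^'n::finite) set)"
proof -
  let ?box = "PiE (UNIV::'n set) (\<lambda>_. {-\<lceil>R\<rceil>..\<lceil>R\<rceil>})"
  have "lattice_ball R \<subseteq> (\<lambda>k. \<chi> i. of_int (k i)) ` ?box"
  proof
    fix v :: "real^'n" assume v: "v \<in> lattice_ball R"
    have "v $ i \<in> \<int>" "\<bar>v $ i\<bar> \<le> R" for i
      using v component_le_norm_cart[of v i] by (auto simp: lattice_ball_def int_lattice_def)
    moreover have "of_int (- \<lceil>R\<rceil>) \<le> v $ i" "v $ i \<le> of_int \<lceil>R\<rceil>" if "\<bar>v $ i\<bar> \<le> R" for i
      using that le_of_int_ceiling[of R] by linarith+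
    ultimately have "v $ i = of_int \<lfloor>v $ i\<rfloor>" "\<lfloor>v $ i\<rfloor> \<in> {-\<lceil>R\<rceil>..\<lceil>R\<rceil>}" for i
      by (auto elim!: Ints_cases simp: le_floor_iff floor_le_iff add.commute add_strict_increasing)
    then show "v \<in> (\<lambda>k. \<chi> i. of_int (k i)) ` ?box"
      by (intro image_eqI[of _ _ "\<lambda>i. \<lfloor>v $ i\<rfloor>"]) (auto simp: vec_eq_iff)
  qed
  moreover have "finite ?box" by (intro finite_PiE) auto
  ultimately show ?thesis by (meson finite_imageI finite_subset)
qed

lemma infsum_Ggroup_eq_sum:
  fixes h :: "(real^'n::finite \<Rightarrow> real^'n) \<Rightarrow> real"
  assumes "\<And>w v. w \<in> Wgroup \<Longrightarrow> v \<in> int_lattice \<Longrightarrow> h (aff_map w v) \<noteq> 0 \<Longrightarrow> norm v \<le> R"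
  shows "(\<Sum>\<^sub>\<infinity>g\<in>Ggroup. h g) = (\<Sum>w\<in>Wgroup. \<Sum>v\<in>lattice_ball R. h (aff_map w v))"
proof -
  let ?aff = "\<lambda>(w,v). aff_map w v"
  let ?T = "?aff ` (Wgroup \<times> lattice_ball R)"
  have "(\<Sum>\<^sub>\<infinity>g\<in>Ggroup. h g) = (\<Sum>\<^sub>\<infinity>g\<in>?T. h g)"
  proof (rule infsum_cong_neutral)
    fix g :: "real^'n \<Rightarrow> real^'n" assume "g \<in> ?T - Ggroup"
    then show "h g = 0" unfolding Ggroup_eq_aff_maps by (auto simp: lattice_ball_def)
  next
    fix g :: "real^'n \<Rightarrow> real^'n" assume "g \<in> Ggroup - ?T"
    then obtain w v where "w \<in> Wgroup" "v \<in> int_lattice" "v \<notin> lattice_ball R" "g = aff_map w v"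
      unfolding Ggroup_eq_aff_maps by auto
    then show "h g = 0" using assms by (force simp: lattice_ball_def)
  qed simp
  also have "\<dots> = (\<Sum>g\<in>?T. h g)"
    by (intro infsum_finite finite_imageI finite_cartesian_product finite_Wgroup finite_lattice_ball)
  also have "\<dots> = (\<Sum>(w,v)\<in>Wgroup \<times> lattice_ball R. h (aff_map w v))"
    using inj_on_subset[OF inj_on_aff_map, of "Wgroup \<times> lattice_ball R"] Wgroup_subset_signed_perms
    by (subst sum.reindex) (auto simp: case_prod_unfold)
  also have "\<dots> = (\<Sum>w\<in>Wgroup. \<Sum>v\<in>lattice_ball R. h (aff_map w v))"
    by (rule sum.cartesian_product[symmetric])
  finally show ?thesis .
qed

lemma compact_vimage_aff_map:
  assumes "w \<in> signed_perms" "compact P"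
  shows "compact {y. aff_map w v y \<in> P}"
proof -
  have orth: "orthogonal_transformation w" by (rule orthogonal_transformation_signed_perm[OF assms(1)])
  have "{y. aff_map w v y \<in> P} = inv w ` ((\<lambda>p. p - v) ` P)"
    using orthogonal_transformation_bij[OF orth]
    by (auto simp: aff_map_def image_iff bij_inv_eq_iff bij_is_surj surj_f_inv_f intro!: bexI[of _ "w _ + v"])
  moreover have "continuous_on UNIV (inv w)"
    using orthogonal_transformation_inv[OF orth]
    by (intro linear_continuous_on orthogonal_transformation_linear[THEN linear_conv_bounded_linear[THEN iffD1]])
  ultimately show ?thesis
    using assms(2) by (metis compact_continuous_image compact_translation_subtract continuous_on_subset subset_UNIV)
qed

lemma norm_le_if_aff_map_mem_cball:
  assumes "w \<in> Wgroup" "norm y \<le> R" "aff_map w v y \<in> cball 0 R"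
  shows "norm v \<le> 2 * R"
proof -
  have "norm (w y) = norm y"
    using assms(1) by (intro orthogonal_transformation_norm orthogonal_transformation_Wgroup)
  moreover have "norm v \<le> norm (w y + v) + norm (w y)"
    using norm_triangle_ineq4[of "w y + v" "w y"] by simp
  moreover have "norm (w y + v) \<le> R" using assms(3) by (simp add: aff_map_def)
  ultimately show ?thesis using assms(2) by linarith
qed

lemma infsum_indicator_Ggroup_eq_sum:
  fixes P :: "(real^'n::finite) set"
  assumes "P \<subseteq> cball 0 R" "norm y \<le> R"
  shows "(\<Sum>\<^sub>\<infinity>g\<in>Ggroup. indicator P (g y) :: real)
    = (\<Sum>w\<in>Wgroup. \<Sum>v\<in>lattice_ball (2*R). indicator P (aff_map w v y))"
proof (rule infsum_Ggroup_eq_sum)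
  fix w v assume "w \<in> Wgroup" "indicator P (aff_map w v y) \<noteq> (0::real)"
  then have "aff_map w v y \<in> cball 0 R" using assms(1) by (auto simp: indicator_def split: if_splits)
  then show "norm v \<le> 2 * R" by (rule norm_le_if_aff_map_mem_cball[OF \<open>w \<in> Wgroup\<close> assms(2)])
qed

lemma measure_preimages_sum_eq:
  fixes P S :: "(real^'n::finite) set"
  assumes P: "compact P" "P \<subseteq> cball 0 R" and S: "S \<in> lmeasurable" "S \<subseteq> cball 0 R"
    and multi_tile: "AE x in lebesgue. (\<Sum>\<^sub>\<infinity>g\<in>Ggroup. indicator P (g x)) = real_of_int m"
  shows "(\<Sum>w\<in>Wgroup. \<Sum>v\<in>lattice_ball (2*R). measure lebesgue (S \<inter> {y. aff_map w v y \<in> P}))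
    = m * measure lebesgue S"
proof -
  define A where "A w v = S \<inter> {y. aff_map w v y \<in> P}" for w v
  have A: "A w v \<in> lmeasurable" if "w \<in> Wgroup" for w v
    unfolding A_def using that Wgroup_subset_signed_perms compact_vimage_aff_map[OF _ P(1)]
    by (intro fmeasurable_Int_fmeasurable[OF S(1)] fmeasurableD lmeasurable_compact) blast
  have count: "(\<Sum>\<^sub>\<infinity>g\<in>Ggroup. indicator P (g y) :: real)
      = (\<Sum>w\<in>Wgroup. \<Sum>v\<in>lattice_ball (2*R). indicator (A w v) y)" if "y \<in> S" for y
  proof -
    have "norm y \<le> R" using that S(2) by auto
    then show ?thesis
      using infsum_indicator_Ggroup_eq_sum[OF P(2)] that by (simp add: A_def indicator_def)
  qed
  have outside: "indicator (A w v) y = (0::real)" if "y \<notin> S" for w v y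
    using that by (simp add: A_def)
  have "AE y in lebesgue. (\<Sum>w\<in>Wgroup. \<Sum>v\<in>lattice_ball (2*R). indicator (A w v) y)
      = indicator S y * real_of_int m"
    using multi_tile
  proof eventually_elim
    case (elim y)
    then show ?case by (cases "y \<in> S") (simp_all add: count outside)
  qed
  then have "integral\<^sup>L lebesgue (\<lambda>y. \<Sum>w\<in>Wgroup. \<Sum>v\<in>lattice_ball (2*R). indicator (A w v) y)
      = integral\<^sup>L lebesgue (\<lambda>y. indicator S y * real_of_int m)"
    using A S(1) by (intro integral_cong_AE borel_measurable_sum borel_measurable_indicator) auto
  moreover have "integral\<^sup>L lebesgue (\<lambda>y. \<Sum>w\<in>Wgroup. \<Sum>v\<in>lattice_ball (2*R). indicator (A w v) y)
      = (\<Sum>w\<in>Wgroup. \<Sum>v\<in>lattice_ball (2*R). measure lebesgue (A w v))"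
  proof -
    have "integrable lebesgue (indicator (A w v) :: _ \<Rightarrow> real)" if "w \<in> Wgroup" for w v
      using A[OF that, of v] by (intro integrable_real_indicator) (auto simp: fmeasurable_def)
    then show ?thesis
      by (simp add: Bochner_Integration.integral_sum integrable_sum)
  qed
  moreover have "integral\<^sup>L lebesgue (\<lambda>y. indicator S y * real_of_int m) = m * measure lebesgue S"
    using S(1) by (simp add: fmeasurable_def integrable_real_indicator)
  ultimately show ?thesis unfolding A_def by simp
qed

text \<open>Half-open, so that its integer translates are pairwise disjoint.\<close>
definition unit_cube :: "(real^'n::finite) set" where
  "unit_cube = {x. \<forall>i. 0 \<le> x $ i \<and> x $ i < 1}"

lemma unit_cube_subset: "box 0 1 \<subseteq> unit_cube" "unit_cube \<subseteq> cbox 0 1"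
  by (auto simp: unit_cube_def mem_box_cart less_imp_le)

lemma lmeasurable_unit_cube: "unit_cube \<in> lmeasurable"
proof -
  let ?U = "\<Union>i. {x::real^'n. 1 \<le> x $ i}"
  have eq: "unit_cube = cbox 0 1 - ?U"
    by (auto simp: unit_cube_def mem_box_cart not_le less_imp_le) (meson not_le)
  have "closed ?U"
    by (intro closed_UN finite_UNIV ballI closed_Collect_le continuous_intros) auto
  then have "?U \<in> sets lebesgue"
    using lebesgue_closedin[of UNIV ?U] by simp
  then show ?thesis
    unfolding eq by (simp add: fmeasurable_Diff)
qed

lemma measure_unit_cube: "measure lebesgue (unit_cube :: (real^'n::finite) set) = 1"
proof -
  have cbox: "measure lebesgue (cbox 0 (1::real^'n)) = 1"
    by (simp add: content_cbox_cart interval_ne_empty_cart)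
  moreover have "measure lborel (box 0 (1::real^'n)) = measure lborel (cbox 0 (1::real^'n))"
    by (simp only: measure_lborel_box_eq measure_lborel_cbox_eq)
  then have "measure lebesgue (box 0 (1::real^'n)) = 1"
    using cbox by simp
  moreover have "measure lebesgue (box 0 (1::real^'n)) \<le> measure lebesgue (unit_cube :: (real^'n) set)"
    using lmeasurable_unit_cube unit_cube_subset(1) by (intro measure_mono_fmeasurable) auto
  moreover have "measure lebesgue (unit_cube :: (real^'n) set) \<le> measure lebesgue (cbox 0 (1::real^'n))"
    using lmeasurable_unit_cube unit_cube_subset(2) by (intro measure_mono_fmeasurable) auto
  ultimately show ?thesis by linarith
qed

lemma unit_cube_translate_iff:
  assumes "u \<in> int_lattice"
  shows "y - u \<in> unit_cube \<longleftrightarrow> u = (\<chi> i. of_int \<lfloor>y $ i\<rfloor>)"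
proof -
  have "0 \<le> y $ i - u $ i \<and> y $ i - u $ i < 1 \<longleftrightarrow> u $ i = of_int \<lfloor>y $ i\<rfloor>" for i
  proof -
    obtain k where k: "u $ i = of_int k" using assms by (auto simp: int_lattice_def elim: Ints_cases)
    have "of_int \<lfloor>y $ i\<rfloor> \<le> y $ i" "y $ i - of_int \<lfloor>y $ i\<rfloor> < 1"
      using real_of_int_floor_add_one_gt[of "y $ i"] by linarith+
    then show ?thesis using floor_unique[of k "y $ i"] k by auto
  qed
  then show ?thesis by (auto simp: unit_cube_def vec_eq_iff)
qed

lemma lattice_translates_unit_cube_cover:
  fixes A :: "(real^'n::finite) set"
  assumes A: "A \<subseteq> cball 0 R" and cube: "(unit_cube :: (real^'n) set) \<subseteq> cball 0 R"
  shows "A = (\<Union>u\<in>lattice_ball (2*R). A \<inter> {y. y - u \<in> unit_cube})"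
proof
  show "A \<subseteq> (\<Union>u\<in>lattice_ball (2*R). A \<inter> {y. y - u \<in> unit_cube})"
  proof
    fix y assume y: "y \<in> A"
    define u where "u = (\<chi> i. (of_int \<lfloor>y $ i\<rfloor> :: real))"
    have u: "u \<in> int_lattice" by (simp add: u_def int_lattice_def)
    then have cube_u: "y - u \<in> unit_cube" by (simp add: unit_cube_translate_iff u_def)
    then have "norm (y - u) \<le> R" using cube by auto
    moreover have "norm y \<le> R" using y A by auto
    ultimately have "norm u \<le> 2 * R"
      using norm_triangle_ineq4[of y "y - u"] by simp
    with u y cube_u show "y \<in> (\<Union>u\<in>lattice_ball (2*R). A \<inter> {y. y - u \<in> unit_cube})"
      by (auto simp: lattice_ball_def)
  qed
qed auto

lemma sum_measure_lattice_translates: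
  fixes A :: "(real^'n::finite) set"
  assumes A: "A \<in> sets lebesgue" "A \<subseteq> cball 0 R" and cube: "(unit_cube :: (real^'n) set) \<subseteq> cball 0 R"
  shows "(\<Sum>u\<in>lattice_ball (2*R). measure lebesgue (unit_cube \<inter> {x. x + u \<in> A})) = measure lebesgue A"
proof -
  define T where "T u = A \<inter> {y. y - u \<in> unit_cube}" for u :: "real^'n"
  have "(+) u ` (unit_cube \<inter> {x. x + u \<in> A}) = T u" for u
  proof
    show "(+) u ` (unit_cube \<inter> {x. x + u \<in> A}) \<subseteq> T u" by (auto simp: T_def add.commute)
    show "T u \<subseteq> (+) u ` (unit_cube \<inter> {x. x + u \<in> A})"
    proof
      fix y assume "y \<in> T u"
      then show "y \<in> (+) u ` (unit_cube \<inter> {x. x + u \<in> A})"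
        by (intro image_eqI[of _ _ "y - u"]) (auto simp: T_def)
    qed
  qed
  then have measure_T: "measure lebesgue (unit_cube \<inter> {x. x + u \<in> A}) = measure lebesgue (T u)" for u
    by (metis measure_translation)
  have "T u = (+) u ` unit_cube \<inter> A" for u
    by (auto simp: T_def image_iff) (metis add.commute diff_add_cancel)
  then have T: "T u \<in> lmeasurable" for u
    by (simp add: fmeasurable_Int_fmeasurable measurable_translation lmeasurable_unit_cube A(1))
  have "A = (\<Union>u\<in>lattice_ball (2*R). T u)"
    unfolding T_def by (rule lattice_translates_unit_cube_cover[OF A(2) cube])
  moreover have "pairwise (\<lambda>u u'. disjnt (T u) (T u')) (lattice_ball (2*R))"
    by (auto simp: pairwise_def disjnt_def T_def lattice_ball_def unit_cube_translate_iff)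
  ultimately have "measure lebesgue A = (\<Sum>u\<in>lattice_ball (2*R). measure lebesgue (T u))"
    using T by (simp add: measure_UNION' finite_lattice_ball)
  then show ?thesis by (simp add: measure_T)
qed

lemma sum_measure_unit_cube_preimages:
  fixes P :: "(real^'n::finite) set"
  assumes w: "w \<in> signed_perms" and P: "compact P" "P \<subseteq> cball 0 R" and cube: "(unit_cube :: (real^'n) set) \<subseteq> cball 0 R"
  shows "(\<Sum>v\<in>lattice_ball (2*R). measure lebesgue (unit_cube \<inter> {y. aff_map w v y \<in> P}))
    = measure lebesgue P"
proof -
  have orth: "orthogonal_transformation w" by (rule orthogonal_transformation_signed_perm[OF w])
  define A where "A = {y. w y \<in> P}"
  have A: "compact A"
    using compact_vimage_aff_map[OF w P(1), of 0] by (simp add: A_def aff_map_def)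
  have "w ` lattice_ball (2*R) \<subseteq> lattice_ball (2*R)"
    using signed_perm_int_lattice[OF w] orthogonal_transformation_norm[OF orth]
    by (auto simp: lattice_ball_def)
  moreover have inj: "inj_on w (lattice_ball (2*R))"
    using orthogonal_transformation_inj[OF orth] by (auto intro: inj_on_subset)
  ultimately have permutes: "w ` lattice_ball (2*R) = lattice_ball (2*R)"
    by (rule endo_inj_surj[OF finite_lattice_ball])
  have "(\<Sum>v\<in>lattice_ball (2*R). measure lebesgue (unit_cube \<inter> {y. aff_map w v y \<in> P}))
      = (\<Sum>u\<in>lattice_ball (2*R). measure lebesgue (unit_cube \<inter> {y. aff_map w (w u) y \<in> P}))"
    by (subst permutes[symmetric], subst sum.reindex[OF inj]) simp
  also have "\<dots> = (\<Sum>u\<in>lattice_ball (2*R). measure lebesgue (unit_cube \<inter> {y. y + u \<in> A}))"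
    using orthogonal_transformation_linear[OF orth]
    by (simp add: A_def aff_map_def linear_add)
  also have "\<dots> = measure lebesgue A"
  proof (rule sum_measure_lattice_translates[OF _ _ cube])
    show "A \<in> sets lebesgue" using lmeasurable_compact[OF A] by (rule fmeasurableD)
    show "A \<subseteq> cball 0 R" using P(2) orthogonal_transformation_norm[OF orth] by (auto simp: A_def)
  qed
  also have "\<dots> = measure lebesgue (w ` A)"
    using measure_signed_perm_image[OF w lmeasurable_compact[OF A]] by simp
  also have "w ` A = P"
  proof
    show "P \<subseteq> w ` A"
    proof
      fix z assume "z \<in> P"
      moreover obtain y where "z = w y" using orthogonal_transformation_surj[OF orth] by (metis surjD)
      ultimately show "z \<in> w ` A" by (simp add: A_def)
    qed
  qed (auto simp: A_def)
  finally show ?thesis .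
qed

lemma multiplicity_eq_card_Wgroup_measure:
  fixes P :: "(real^'n::finite) set"
  assumes P: "compact P"
    and multi_tile: "AE x in lebesgue. (\<Sum>\<^sub>\<infinity>g\<in>Ggroup. indicator P (g x)) = real_of_int m"
  shows "real_of_int m = real (card (Wgroup :: (real^'n \<Rightarrow> real^'n) set)) * measure lebesgue P"
proof -
  have "bounded (P \<union> (unit_cube :: (real^'n) set))"
    using compact_imp_bounded[OF P] bounded_subset[OF bounded_cbox unit_cube_subset(2)] by simp
  then obtain R where "\<forall>y \<in> P \<union> unit_cube. norm y \<le> R" by (auto simp: bounded_iff)
  then have R: "P \<subseteq> cball 0 R" "(unit_cube :: (real^'n) set) \<subseteq> cball 0 R" by auto
  have "real_of_int m = (\<Sum>w\<in>Wgroup. \<Sum>v\<in>lattice_ball (2*R).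
      measure lebesgue (unit_cube \<inter> {y. aff_map w v y \<in> P}))"
    using measure_preimages_sum_eq[OF P R(1) lmeasurable_unit_cube R(2) multi_tile]
    by (simp add: measure_unit_cube)
  also have "\<dots> = (\<Sum>w\<in>(Wgroup :: (real^'n \<Rightarrow> real^'n) set). measure lebesgue P)"
    using sum_measure_unit_cube_preimages[OF _ P R] Wgroup_subset_signed_perms
    by (intro sum.cong) auto
  finally show ?thesis by simp
qed

section \<open>Local cones of polytopes\<close>

text \<open>\<open>A\<close> agrees with its tangent cone at \<open>z\<close> inside \<open>ball z e\<close>.\<close>
definition locally_conic :: "'a::real_normed_vector set \<Rightarrow> 'a \<Rightarrow> real \<Rightarrow> bool" where
  "locally_conic A z e \<longleftrightarrow> (\<forall>y t. dist y z < e \<longrightarrow> 0 < t \<longrightarrow> t * dist y z < e \<longrightarrow>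
       (y \<in> A \<longleftrightarrow> z + t *\<^sub>R (y - z) \<in> A))"

lemma locally_conic_mono: "locally_conic A z e \<Longrightarrow> e' \<le> e \<Longrightarrow> locally_conic A z e'"
  unfolding locally_conic_def by auto

lemma locally_conic_UNIV: "locally_conic UNIV z e"
  unfolding locally_conic_def by auto

lemma locally_conic_Int: "locally_conic A z e \<Longrightarrow> locally_conic B z e \<Longrightarrow> locally_conic (A \<inter> B) z e"
  unfolding locally_conic_def by blast

lemma locally_conic_Un: "locally_conic A z e \<Longrightarrow> locally_conic B z e \<Longrightarrow> locally_conic (A \<union> B) z e"
  unfolding locally_conic_def by blast

lemma dist_dilation:
  fixes y z :: "'a::real_normed_vector"
  shows "0 < t \<Longrightarrow> dist (z + t *\<^sub>R (y - z)) z = t * dist y z"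
  by (simp add: dist_norm)

lemma locally_conic_ball:
  assumes "ball z e \<subseteq> A \<or> ball z e \<inter> A = {}"
  shows "locally_conic A z e"
  unfolding locally_conic_def
proof (intro allI impI)
  fix y t assume "dist y z < e" "0 < t" "t * dist y z < e"
  then have "dist y z < e" "dist (z + t *\<^sub>R (y - z)) z < e"
    by (simp_all add: dist_dilation)
  then have "y \<in> ball z e" "z + t *\<^sub>R (y - z) \<in> ball z e"
    by (simp_all add: dist_commute)
  then show "y \<in> A \<longleftrightarrow> z + t *\<^sub>R (y - z) \<in> A" using assms by blast
qed

lemma locally_conic_halfspace_le:
  fixes a z :: "'a::real_inner"
  shows "\<exists>e>0. locally_conic {x. a \<bullet> x \<le> b} z e"
proof -
  consider "a \<bullet> z < b" | "a \<bullet> z > b" | "a \<bullet> z = b" by linarith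
  then show ?thesis
  proof cases
    case 1
    then obtain e where "e > 0" "ball z e \<subseteq> {x. a \<bullet> x < b}"
      using open_contains_ball_eq[OF open_halfspace_lt, of z a b] by auto
    then show ?thesis by (intro exI[of _ e] conjI locally_conic_ball disjI1) auto
  next
    case 2
    then obtain e where "e > 0" "ball z e \<subseteq> {x. a \<bullet> x > b}"
      using open_contains_ball_eq[OF open_halfspace_gt, of z b a] by auto
    then show ?thesis by (intro exI[of _ e] conjI locally_conic_ball disjI2) auto
  next
    case 3
    have "a \<bullet> (z + t *\<^sub>R (y - z)) \<le> b \<longleftrightarrow> a \<bullet> y \<le> b" if "0 < t" for t y
    proof -
      have "a \<bullet> (z + t *\<^sub>R (y - z)) - b = t * (a \<bullet> y - b)"
        using 3 by (simp add: inner_add_right inner_diff_right algebra_simps)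
      then show ?thesis
        using mult_le_cancel_left_pos[OF that, of "a \<bullet> y - b" 0]
        by (subst diff_le_0_iff_le[symmetric]) simp
    qed
    then have "locally_conic {x. a \<bullet> x \<le> b} z 1"
      unfolding locally_conic_def by simp
    then show ?thesis by (intro exI[of _ 1]) simp
  qed
qed

lemma locally_conic_Inter:
  assumes "finite F" "\<And>A. A \<in> F \<Longrightarrow> \<exists>e>0. locally_conic A z e"
  shows "\<exists>e>0. locally_conic (\<Inter>F) z e"
  using assms
proof (induction F rule: finite_induct)
  case empty then show ?case using locally_conic_UNIV by (intro exI[of _ 1]) auto
next
  case (insert A F)
  obtain e1 where "e1 > 0" "locally_conic A z e1" using insert.prems by blast
  moreover obtain e2 where "e2 > 0" "locally_conic (\<Inter>F) z e2" using insert.IH insert.prems by blast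
  ultimately have "locally_conic (A \<inter> \<Inter>F) z (min e1 e2)"
    using locally_conic_mono[of A z e1 "min e1 e2"] locally_conic_mono[of "\<Inter>F" z e2 "min e1 e2"]
    by (simp add: locally_conic_Int)
  with \<open>e1 > 0\<close> \<open>e2 > 0\<close> show ?case by (intro exI[of _ "min e1 e2"]) auto
qed

lemma locally_conic_Union:
  assumes "finite F" "\<And>A. A \<in> F \<Longrightarrow> \<exists>e>0. locally_conic A z e"
  shows "\<exists>e>0. locally_conic (\<Union>F) z e"
  using assms
proof (induction F rule: finite_induct)
  case empty then show ?case by (intro exI[of _ 1]) (simp add: locally_conic_ball)
next
  case (insert A F)
  obtain e1 where "e1 > 0" "locally_conic A z e1" using insert.prems by blast
  moreover obtain e2 where "e2 > 0" "locally_conic (\<Union>F) z e2" using insert.IH insert.prems by blast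
  ultimately have "locally_conic (A \<union> \<Union>F) z (min e1 e2)"
    using locally_conic_mono[of A z e1 "min e1 e2"] locally_conic_mono[of "\<Union>F" z e2 "min e1 e2"]
    by (simp add: locally_conic_Un)
  with \<open>e1 > 0\<close> \<open>e2 > 0\<close> show ?case by (intro exI[of _ "min e1 e2"]) auto
qed

lemma locally_conic_polyhedron:
  fixes S :: "'a::euclidean_space set"
  assumes "polyhedron S"
  shows "\<exists>e>0. locally_conic S z e"
proof -
  obtain H where H: "finite H" "S = \<Inter>H" "\<forall>h\<in>H. \<exists>a b. a \<noteq> 0 \<and> h = {x. a \<bullet> x \<le> b}"
    using assms unfolding polyhedron_def by blast
  have "\<exists>e>0. locally_conic h z e" if "h \<in> H" for h
    using bspec[OF H(3) that] locally_conic_halfspace_le by (elim exE conjE) simp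
  then show ?thesis unfolding H(2) by (rule locally_conic_Inter[OF H(1)])
qed

lemma locally_conic_gen_polytope:
  assumes "gen_polytope P"
  shows "\<exists>e>0. locally_conic P z e"
proof -
  obtain F where F: "finite F" "\<forall>S\<in>F. polytope S" "P = \<Union>F"
    using assms unfolding gen_polytope_def by blast
  show ?thesis
    unfolding F(3) using F(2)
    by (intro locally_conic_Union[OF F(1)]) (simp add: locally_conic_polyhedron polytope_imp_polyhedron)
qed

section \<open>Local density\<close>

definition ball_density :: "'a::euclidean_space set \<Rightarrow> 'a \<Rightarrow> real \<Rightarrow> real" where
  "ball_density A z r = measure lebesgue (ball z r \<inter> A) / measure lebesgue (ball z r)"

lemma locally_conic_dilation_image:
  assumes cone: "locally_conic A z e" and r: "0 < r" "r < e" and s: "0 < s" "s < e"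
  shows "ball z r \<inter> A = (\<lambda>y. (r/s) *\<^sub>R y + (z - (r/s) *\<^sub>R z)) ` (ball z s \<inter> A)"
proof -
  define t where "t = r / s"
  have t: "0 < t" "t * s = r" using r s by (auto simp: t_def)
  have cone_t: "y \<in> A \<longleftrightarrow> z + t *\<^sub>R (y - z) \<in> A" if "dist y z < s" for y
  proof -
    have "t * dist y z < t * s" using that t(1) by simp
    then have "t * dist y z < e" using t(2) r by linarith
    moreover have "dist y z < e" using that s by linarith
    ultimately show ?thesis
      using cone t(1) unfolding locally_conic_def by blast
  qed
  have dilation: "(\<lambda>y. (r/s) *\<^sub>R y + (z - (r/s) *\<^sub>R z)) = (\<lambda>y. z + t *\<^sub>R (y - z))"
    by (auto simp: t_def algebra_simps)
  show ?thesis unfolding dilation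
  proof
    show "ball z r \<inter> A \<subseteq> (\<lambda>y. z + t *\<^sub>R (y - z)) ` (ball z s \<inter> A)"
    proof
      fix y' assume y': "y' \<in> ball z r \<inter> A"
      define y where "y = z + (1/t) *\<^sub>R (y' - z)"
      have y'_eq: "y' = z + t *\<^sub>R (y - z)" using t by (simp add: y_def)
      have "t * dist y z = dist y' z"
        unfolding y'_eq using dist_dilation[OF t(1), of z y] by simp
      also have "\<dots> < t * s" using y' t(2) by (simp add: dist_commute)
      finally have "dist y z < s" using t(1) by simp
      with y' cone_t show "y' \<in> (\<lambda>y. z + t *\<^sub>R (y - z)) ` (ball z s \<inter> A)"
        unfolding y'_eq by (auto simp: dist_commute)
    qed
    show "(\<lambda>y. z + t *\<^sub>R (y - z)) ` (ball z s \<inter> A) \<subseteq> ball z r \<inter> A"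
    proof clarify
      fix y assume y: "y \<in> ball z s" "y \<in> A"
      then have "dist y z < s" by (simp add: dist_commute)
      then have "t * dist y z < t * s" using t(1) by simp
      then have "dist (z + t *\<^sub>R (y - z)) z < r"
        using t by (simp add: dist_dilation)
      then show "z + t *\<^sub>R (y - z) \<in> ball z r \<inter> A"
        using y cone_t[OF \<open>dist y z < s\<close>] by (simp add: dist_commute)
    qed
  qed
qed

lemma ball_density_locally_conic:
  fixes A :: "'a::euclidean_space set"
  assumes cone: "locally_conic A z e" and "0 < r" "r < e" "0 < s" "s < e"
  shows "ball_density A z r = ball_density A z s"
proof -
  have "measure lebesgue (ball z r \<inter> A) = \<bar>r/s\<bar> ^ DIM('a) * measure lebesgue (ball z s \<inter> A)"
    unfolding locally_conic_dilation_image[OF cone assms(2-)] by (rule measure_lebesgue_affine)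
  moreover have "measure lebesgue (ball z r) = \<bar>r/s\<bar> ^ DIM('a) * measure lebesgue (ball z s)"
    using measure_lebesgue_affine[of "r/s" "z - (r/s) *\<^sub>R z" "ball z s \<inter> UNIV"]
      locally_conic_dilation_image[OF locally_conic_UNIV[of z e] assms(2-)] by simp
  moreover have "\<bar>r/s\<bar> ^ DIM('a) \<noteq> 0" using assms by simp
  ultimately show ?thesis
    unfolding ball_density_def by simp
qed

lemma local_density_eqI:
  assumes "\<forall>\<^sub>F r in at_right 0. ball_density P x r = c"
  shows "local_density P x = c"
proof -
  have eventually_iff: "(\<exists>e>0. \<forall>r. 0 < r \<and> r < e \<longrightarrow>
        measure lebesgue (ball x r \<inter> P) / measure lebesgue (ball x r) = c')
      \<longleftrightarrow> (\<forall>\<^sub>F r in at_right 0. ball_density P x r = c')" for c'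
    by (simp add: eventually_at_right_field ball_density_def imp_conjL)
  show ?thesis
    unfolding local_density_def eventually_iff
  proof (rule the_equality)
    fix c' assume "\<forall>\<^sub>F r in at_right 0. ball_density P x r = c'"
    with assms have "\<forall>\<^sub>F r in at_right (0::real). c' = c"
      by eventually_elim simp
    then show "c' = c" by simp
  qed (rule assms)
qed

lemma eventually_ball_density_gen_polytope:
  assumes "gen_polytope P"
  shows "\<forall>\<^sub>F r in at_right 0. ball_density P z r = local_density P z"
proof -
  obtain e where e: "e > 0" "locally_conic P z e"
    using locally_conic_gen_polytope[OF assms] by blast
  have "\<forall>\<^sub>F r in at_right 0. ball_density P z r = ball_density P z (e/2)"
    unfolding eventually_at_right_field
  proof (intro exI[of _ e] conjI allI impI)
    fix r :: real assume "0 < r" "r < e"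
    then show "ball_density P z r = ball_density P z (e/2)"
      using e by (intro ball_density_locally_conic[OF e(2)]) auto
  qed (rule e(1))
  moreover from this have "local_density P z = ball_density P z (e/2)"
    by (rule local_density_eqI)
  ultimately show ?thesis by simp
qed

lemma local_density_outside:
  assumes "closed P" "z \<notin> P"
  shows "local_density P z = 0"
proof (rule local_density_eqI)
  have "open (- P)" using assms(1) by (simp add: open_Compl)
  then obtain e where "e > 0" "ball z e \<subseteq> - P"
    using assms(2) open_contains_ball by blast
  then have "ball z r \<inter> P = {}" if "r < e" for r
    using subset_ball[of r e z] that by auto
  then show "\<forall>\<^sub>F r in at_right 0. ball_density P z r = 0"
    unfolding eventually_at_right_field ball_density_def using \<open>e > 0\<close> by auto
qed

lemma gen_polytope_compact: "gen_polytope P \<Longrightarrow> compact P"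
  unfolding gen_polytope_def by (auto intro: compact_Union polytope_imp_compact)

lemma ball_density_aff_map:
  assumes w: "w \<in> signed_perms" and P: "compact P"
  shows "ball_density P (aff_map w v x) r
    = measure lebesgue (ball x r \<inter> {y. aff_map w v y \<in> P}) / measure lebesgue (ball x r)"
proof -
  have ball: "aff_map w v ` ball x r = ball (aff_map w v x) r"
    unfolding aff_map_image
    using image_orthogonal_transformation_ball[OF orthogonal_transformation_signed_perm[OF w]]
    by (simp add: aff_map_def)
  have "ball x r \<inter> {y. aff_map w v y \<in> P} \<in> lmeasurable"
    using lmeasurable_compact[OF compact_vimage_aff_map[OF w P]]
    by (intro fmeasurable_Int_fmeasurable lmeasurable_ball fmeasurableD)
  moreover have "aff_map w v ` (ball x r \<inter> {y. aff_map w v y \<in> P}) = ball (aff_map w v x) r \<inter> P"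
    unfolding ball[symmetric] by auto
  ultimately show ?thesis
    unfolding ball_density_def
    using measure_aff_map_image[OF w] ball by (metis lmeasurable_ball)
qed

lemma eventually_ball_density_finite:
  assumes "gen_polytope P" "finite Z"
  shows "\<forall>\<^sub>F r in at_right 0. \<forall>z\<in>Z. ball_density P z r = local_density P z"
  by (intro eventually_ball_finite assms(2) ballI eventually_ball_density_gen_polytope assms(1))

lemma infsum_local_density_Ggroup_eq_sum:
  fixes P :: "(real^'n::finite) set"
  assumes "closed P" "P \<subseteq> cball 0 R" "norm x \<le> R"
  shows "(\<Sum>\<^sub>\<infinity>g\<in>Ggroup. local_density P (g x))
    = (\<Sum>w\<in>Wgroup. \<Sum>v\<in>lattice_ball (2*R). local_density P (aff_map w v x))"
proof (rule infsum_Ggroup_eq_sum)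
  fix w v assume "w \<in> Wgroup" "local_density P (aff_map w v x) \<noteq> 0"
  then have "aff_map w v x \<in> cball 0 R" using local_density_outside[OF assms(1)] assms(2) by blast
  then show "norm v \<le> 2 * R" by (rule norm_le_if_aff_map_mem_cball[OF \<open>w \<in> Wgroup\<close> assms(3)])
qed

lemma sum_ball_density_aff_map_eq_multiplicity:
  fixes P :: "(real^'n::finite) set"
  assumes P: "compact P" "P \<subseteq> cball 0 R" and r: "0 < r" "norm x + r \<le> R"
    and multi_tile: "AE x in lebesgue. (\<Sum>\<^sub>\<infinity>g\<in>Ggroup. indicator P (g x)) = real_of_int m"
  shows "(\<Sum>w\<in>Wgroup. \<Sum>v\<in>lattice_ball (2*R). ball_density P (aff_map w v x) r) = m"
proof -
  let ?M = "\<lambda>w v. measure lebesgue (ball x r \<inter> {y. aff_map w v y \<in> P})"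
  have "ball x r \<subseteq> cball 0 R"
  proof
    fix y assume "y \<in> ball x r"
    then have "norm (y - x) < r" by (simp add: dist_norm norm_minus_commute)
    then show "y \<in> cball 0 R" using norm_triangle_sub[of y x] r(2) by simp
  qed
  then have tiling: "(\<Sum>w\<in>Wgroup. \<Sum>v\<in>lattice_ball (2*R). ?M w v) = m * measure lebesgue (ball x r)"
    by (intro measure_preimages_sum_eq P lmeasurable_ball multi_tile)
  have "(\<Sum>w\<in>Wgroup. \<Sum>v\<in>lattice_ball (2*R). ball_density P (aff_map w v x) r)
      = (\<Sum>w\<in>Wgroup. \<Sum>v\<in>lattice_ball (2*R). ?M w v / measure lebesgue (ball x r))"
    using Wgroup_subset_signed_perms by (intro sum.cong refl ball_density_aff_map P(1)) blast
  also have "\<dots> = (\<Sum>w\<in>Wgroup. \<Sum>v\<in>lattice_ball (2*R). ?M w v) / measure lebesgue (ball x r)"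
    by (simp only: sum_divide_distrib)
  also have "\<dots> = m"
    using tiling r(1) by simp
  finally show ?thesis .
qed

lemma infsum_local_density_eq_multiplicity:
  fixes P :: "(real^'n::finite) set"
  assumes P: "gen_polytope P"
    and multi_tile: "AE x in lebesgue. (\<Sum>\<^sub>\<infinity>g\<in>Ggroup. indicator P (g x)) = real_of_int m"
  shows "(\<Sum>\<^sub>\<infinity>g\<in>Ggroup. local_density P (g x)) = m"
proof -
  have compact: "compact P" by (rule gen_polytope_compact[OF P])
  obtain R where R: "P \<subseteq> cball 0 R" "norm x + 1 \<le> R"
  proof -
    obtain R0 where "\<forall>y\<in>P. norm y \<le> R0" using compact_imp_bounded[OF compact] by (auto simp: bounded_iff)
    then show ?thesis by (intro that[of "max R0 (norm x + 1)"]) auto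
  qed
  let ?Z = "(\<lambda>(w,v). aff_map w v x) ` (Wgroup \<times> lattice_ball (2*R))"
  \<comment> \<open>\<open>r < 1\<close> keeps \<open>ball x r\<close> inside \<open>cball 0 R\<close>\<close>
  have "\<forall>\<^sub>F r in at_right 0. 0 < r \<and> r < 1 \<and> (\<forall>z\<in>?Z. ball_density P z r = local_density P z)"
    by (intro eventually_conj eventually_at_right_less eventually_ball_density_finite P finite_imageI
        finite_cartesian_product finite_Wgroup finite_lattice_ball)
      (auto simp: eventually_at_right_field intro: exI[of _ 1])
  then obtain r where r: "0 < r" "r < 1" and density: "\<forall>z\<in>?Z. ball_density P z r = local_density P z"
    using eventually_happens'[OF trivial_limit_at_right_real] by blast
  have "(\<Sum>\<^sub>\<infinity>g\<in>Ggroup. local_density P (g x))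
      = (\<Sum>w\<in>Wgroup. \<Sum>v\<in>lattice_ball (2*R). local_density P (aff_map w v x))"
    using compact_imp_closed[OF compact] R by (intro infsum_local_density_Ggroup_eq_sum) auto
  also have "\<dots> = (\<Sum>w\<in>Wgroup. \<Sum>v\<in>lattice_ball (2*R). ball_density P (aff_map w v x) r)"
    using density by (intro sum.cong refl) force
  also have "\<dots> = m"
    using compact R r by (intro sum_ball_density_aff_map_eq_multiplicity multi_tile) auto
  finally show ?thesis .
qed

text \<open>The value is the same at every point, so membership in \<open>simplex_T\<close> is not needed.\<close>
theorem proposition1:
  fixes P :: "(real^'n::{finite,linorder}) set" and m :: int
  assumes "gen_polytope P"
    and "AE x in lebesgue. (\<Sum>\<^sub>\<infinity>g\<in>Ggroup. indicator P (g x)) = real_of_int m"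
  shows "\<forall>x\<in>simplex_T. (\<Sum>\<^sub>\<infinity>g\<in>Ggroup. local_density P (g x))
           = real (card (Wgroup :: (real^'n::{finite,linorder} \<Rightarrow> real^'n::{finite,linorder}) set)) * measure lebesgue P"
  using infsum_local_density_eq_multiplicity[OF assms]
    multiplicity_eq_card_Wgroup_measure[OF gen_polytope_compact[OF assms(1)] assms(2)]
  by simp

end
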